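(* Let $H\in\mathbb{R}^{d\times d}$ be symmetric positive definite, $q\in\mathbb{R}^d$ and $\theta_*=H^{-1}q$. For each $n\ge 1$ let $P_n,Q_n,R_n\in\mathbb{R}[X]$ be polynomials, and set $A_n=P_n(H)$, $B_n=Q_n(H)$, $c_n=R_n(H)q$. Assume: (i) ($\theta_*$-stationarity) $\theta_*=A_n\theta_*+B_n\theta_*+c_n$ for all $n\ge 1$; (ii) ($n$-scalability) there exist matrices $A,B\in\mathbb{R}^{d\times d}$ such that $A_n=\frac{n}{n+1}A$ and $B_n=\frac{n-1}{n+1}B$ for all $n\ge 1$. Then there exist polynomials $\bar A,\bar B\in\mathbb{R}[X]$ such that for all $n\ge1$: $$A_n=\frac{2n}{n+1}\Big(I-\frac{\bar A(H)+\bar B(H)}{2}H\Big),\qquad B_n=-\frac{n-1}{n+1}\big(I-\bar B(H)H\big),\qquad c_n=\frac{n\bar A(H)+\bar B(H)}{n+1}\,q.$$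
   Context: These matrices define the second-order iterative algorithm $\theta_{n+1}=A_n\theta_n+B_n\theta_{n-1}+c_n$ (with $\theta_1=\theta_0\in\mathbb{R}^d$) for minimizing $f(\theta)=\frac12\langle\theta,H\theta\rangle-\langle q,\theta\rangle$, whose minimizer is $\theta_*=H^{-1}q$. *)

theory Defs
  imports "HOL-Analysis.Analysis" "HOL-Computational_Algebra.Polynomial"
begin

fun mat_pow :: "real^'n^'n \<Rightarrow> nat \<Rightarrow> real^'n^'n" where
  "mat_pow A 0 = mat 1"
| "mat_pow A (Suc k) = A ** mat_pow A k"

definition poly_mat :: "real poly \<Rightarrow> real^'n^'n \<Rightarrow> real^'n^'n" where
  "poly_mat p A = (\<Sum>i\<le>degree p. coeff p i *\<^sub>R mat_pow A i)"

definition sym_pos_def :: "real^'n^'n \<Rightarrow> bool" where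
  "sym_pos_def H \<longleftrightarrow> transpose H = H \<and> (\<forall>x. x \<noteq> 0 \<longrightarrow> x \<bullet> (H *v x) > 0)"

end

theory Submission
  imports Defs
begin

text \<open>
  Polynomials in an invertible matrix \<open>H\<close> form a finite-dimensional space on which
  multiplication by \<open>H\<close> is injective, hence bijective; so every polynomial in \<open>H\<close> is
  \<open>S(H) H\<close> for some polynomial \<open>S\<close>. Scalability at \<open>n = 1\<close> and \<open>n = 2\<close> shows that
  \<open>A = 2 P\<^sub>1(H)\<close> and \<open>B = 3 Q\<^sub>2(H)\<close> are polynomials in \<open>H\<close>, so we may choose \<open>Bbar\<close> with
  \<open>Bbar(H) H = I + B\<close> and \<open>Abar\<close> with \<open>(Abar + Bbar)(H) H = 2I - A\<close>; this gives the forms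
  of \<open>A\<^sub>n\<close> and \<open>B\<^sub>n\<close>. Stationarity says \<open>c\<^sub>n = (I - A\<^sub>n - B\<^sub>n) \<theta>\<^sub>*\<close>, and writing
  \<open>I - A\<^sub>n - B\<^sub>n\<close> as a polynomial in \<open>H\<close> times \<open>H\<close> turns \<open>H \<theta>\<^sub>*\<close> into \<open>q\<close>.
\<close>

lemma matrix_add_rdistrib: "((A::real^'n^'m) + B) ** C = A ** C + B ** C"
  by (simp add: matrix_matrix_mult_def vec_eq_iff sum.distrib algebra_simps)

lemma matrix_diff_rdistrib: "((A::real^'n^'m) - B) ** C = A ** C - B ** C"
  by (metis add_diff_cancel diff_add_cancel matrix_add_rdistrib)

lemma linear_matrix_mult_left: "linear (\<lambda>M::real^'p^'n. (A::real^'n^'m) ** M)"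
  by (rule linearI) (simp_all add: matrix_add_ldistrib matrix_scalar_ac scalar_matrix_assoc)

lemma linear_matrix_mult_right: "linear (\<lambda>M::real^'n^'m. M ** (A::real^'p^'n))"
  by (rule linearI) (simp_all add: matrix_add_rdistrib scalar_matrix_assoc)

lemma matrix_inv_right:
  fixes A :: "real^'n^'n"
  assumes "invertible A"
  shows "A ** matrix_inv A = mat 1"
  using assms unfolding invertible_def matrix_inv_def
  by (rule someI_ex[where P="\<lambda>A'. A ** A' = mat 1 \<and> A' ** A = mat 1", THEN conjunct1])

lemma sym_pos_def_invertible: "sym_pos_def H \<Longrightarrow> invertible H"
  unfolding sym_pos_def_def invertible_left_inverse matrix_left_invertible_ker
  by (metis inner_zero_right less_irrefl)

lemma mat_pow_commute: "A ** mat_pow A k = mat_pow A k ** A"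
  by (induction k) (simp_all add: matrix_mul_assoc)

lemma poly_mat_eq_sum:
  assumes "degree p \<le> N"
  shows "poly_mat p A = (\<Sum>i\<le>N. coeff p i *\<^sub>R mat_pow A i)"
  unfolding poly_mat_def
  by (rule sum.mono_neutral_left) (use assms in \<open>auto intro!: coeff_eq_0 simp: not_le\<close>)

lemma poly_mat_add: "poly_mat (p + q) A = poly_mat p A + poly_mat q A"
proof -
  have "degree (p + q) \<le> max (degree p) (degree q)"
    by (rule degree_add_le) auto
  then show ?thesis
    by (simp add: poly_mat_eq_sum[of _ "max (degree p) (degree q)"] scaleR_add_left sum.distrib)
qed

lemma poly_mat_diff: "poly_mat (p - q) A = poly_mat p A - poly_mat q A"
  by (metis add_diff_cancel diff_add_cancel poly_mat_add)

lemma poly_mat_smult: "poly_mat (smult c p) A = c *\<^sub>R poly_mat p A"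
  by (simp add: poly_mat_eq_sum[of _ "degree p"] scaleR_sum_right)

lemma poly_mat_const: "poly_mat [:c:] A = c *\<^sub>R mat 1"
  by (simp add: poly_mat_def)

lemma poly_mat_pCons_0: "poly_mat (pCons 0 p) A = A ** poly_mat p A"
proof -
  have "A ** poly_mat p A = (\<Sum>i\<le>degree p. coeff p i *\<^sub>R mat_pow A (Suc i))"
    unfolding poly_mat_def linear_sum[OF linear_matrix_mult_left]
    by (simp add: matrix_scalar_ac flip: scalar_matrix_assoc)
  also have "\<dots> = (\<Sum>i\<le>Suc (degree p). coeff (pCons 0 p) i *\<^sub>R mat_pow A i)"
    by (subst sum.atMost_Suc_shift) simp
  also have "\<dots> = poly_mat (pCons 0 p) A"
    by (rule poly_mat_eq_sum[symmetric]) (simp add: degree_pCons_le)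
  finally show ?thesis ..
qed

lemma poly_mat_commute: "poly_mat p A ** A = A ** poly_mat p A"
  unfolding poly_mat_def linear_sum[OF linear_matrix_mult_left] linear_sum[OF linear_matrix_mult_right]
  by (simp add: matrix_scalar_ac mat_pow_commute flip: scalar_matrix_assoc)

lemma subspace_range_poly_mat: "subspace (range (\<lambda>p. poly_mat p A))"
  unfolding subspace_def
proof (intro conjI ballI allI)
  show "0 \<in> range (\<lambda>p. poly_mat p A)"
    by (rule range_eqI[of _ _ 0]) (simp add: poly_mat_def)
next
  fix x y assume "x \<in> range (\<lambda>p. poly_mat p A)" "y \<in> range (\<lambda>p. poly_mat p A)"
  then obtain a b where "x = poly_mat a A" "y = poly_mat b A" by blast
  then show "x + y \<in> range (\<lambda>p. poly_mat p A)"
    by (metis poly_mat_add rangeI)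
next
  fix c x assume "x \<in> range (\<lambda>p. poly_mat p A)"
  then obtain a where "x = poly_mat a A" by blast
  then show "c *\<^sub>R x \<in> range (\<lambda>p. poly_mat p A)"
    by (metis poly_mat_smult rangeI)
qed

lemma poly_mat_factor_right:
  fixes H :: "real^'n^'n"
  assumes "invertible H"
  shows "\<exists>s. poly_mat s H ** H = poly_mat p H"
proof -
  let ?V = "range (\<lambda>p. poly_mat p H)"
  have "inj ((**) H)"
    by (rule injI) (metis assms invertible_left_inverse matrix_mul_assoc matrix_mul_lid)
  then have "dim ((**) H ` ?V) = dim ?V"
    by (intro dim_image_eq[OF linear_matrix_mult_left]) (auto simp: inj_on_def)
  moreover have "(**) H ` ?V \<subseteq> ?V"
    by (auto simp flip: poly_mat_pCons_0)
  ultimately have "(**) H ` ?V = ?V"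
    by (intro subspace_dim_equal linear_subspace_image[OF linear_matrix_mult_left]
        subspace_range_poly_mat) simp_all
  then have "poly_mat p H \<in> (**) H ` ?V" by simp
  then show ?thesis by (auto simp: poly_mat_commute)
qed

lemma scaleR_combination_eq:
  fixes I A B :: "'a::real_vector" and n :: real
  assumes "n \<ge> 0"
  shows "(1 / (n + 1)) *\<^sub>R (n *\<^sub>R ((2 *\<^sub>R I - A) - (I + B)) + (I + B))
    = I - (n / (n + 1)) *\<^sub>R A - ((n - 1) / (n + 1)) *\<^sub>R B"
proof -
  define k where "k = 1 / (n + 1)"
  have k: "n * k + k = 1"
    using assms by (simp add: k_def field_simps)
  have fractions: "n / (n + 1) = n * k" "(n - 1) / (n + 1) = n * k - k"
    by (simp_all add: k_def diff_divide_distrib)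
  have "k *\<^sub>R (n *\<^sub>R ((2 *\<^sub>R I - A) - (I + B)) + (I + B))
      = (n * k + k) *\<^sub>R I - (n * k) *\<^sub>R A - (n * k - k) *\<^sub>R B"
    by (simp add: algebra_simps flip: scaleR_add_left)
  then show ?thesis
    unfolding k_def[symmetric] fractions k by simp
qed

lemma scalable_normal_form:
  fixes A B S T H :: "real^'n^'n" and n :: real
  assumes S: "S ** H = 2 *\<^sub>R mat 1 - A" and T: "T ** H = mat 1 + B" and "n \<ge> 0"
  shows "(n / (n + 1)) *\<^sub>R A = (2 * n / (n + 1)) *\<^sub>R (mat 1 - (1/2) *\<^sub>R (S ** H))"
    and "((n - 1) / (n + 1)) *\<^sub>R B = - (((n - 1) / (n + 1)) *\<^sub>R (mat 1 - T ** H))"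
    and "((1 / (n + 1)) *\<^sub>R (n *\<^sub>R (S - T) + T)) ** H
      = mat 1 - (n / (n + 1)) *\<^sub>R A - ((n - 1) / (n + 1)) *\<^sub>R B"
proof -
  have "mat 1 - (1/2) *\<^sub>R (S ** H) = (1/2) *\<^sub>R A"
    by (simp add: S scaleR_diff_right)
  moreover have "2 * n / (n + 1) * (1/2) = n / (n + 1)"
    using \<open>n \<ge> 0\<close> by (simp add: field_simps)
  ultimately show "(n / (n + 1)) *\<^sub>R A = (2 * n / (n + 1)) *\<^sub>R (mat 1 - (1/2) *\<^sub>R (S ** H))"
    by (metis scaleR_scaleR)
  show "((n - 1) / (n + 1)) *\<^sub>R B = - (((n - 1) / (n + 1)) *\<^sub>R (mat 1 - T ** H))"
    by (simp add: T)
  have "((1 / (n + 1)) *\<^sub>R (n *\<^sub>R (S - T) + T)) ** H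
      = (1 / (n + 1)) *\<^sub>R (n *\<^sub>R (S ** H - T ** H) + T ** H)"
    by (simp add: matrix_add_rdistrib matrix_diff_rdistrib flip: scalar_matrix_assoc)
  then show "((1 / (n + 1)) *\<^sub>R (n *\<^sub>R (S - T) + T)) ** H
      = mat 1 - (n / (n + 1)) *\<^sub>R A - ((n - 1) / (n + 1)) *\<^sub>R B"
    unfolding S T scaleR_combination_eq[OF \<open>n \<ge> 0\<close>] .
qed

lemma scalable_coefficients_factor:
  fixes H A B :: "real^'n^'n"
  assumes "invertible H"
    and "\<forall>n\<ge>1. poly_mat (P n) H = (real n / (real n + 1)) *\<^sub>R A \<and>
        poly_mat (Q n) H = ((real n - 1) / (real n + 1)) *\<^sub>R B"
  shows "\<exists>s t. poly_mat s H ** H = 2 *\<^sub>R mat 1 - A \<and> poly_mat t H ** H = mat 1 + B"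
proof -
  have "2 *\<^sub>R mat 1 - A = poly_mat ([:2:] - smult 2 (P 1)) H"
    using assms(2)[rule_format, of 1] by (simp add: poly_mat_diff poly_mat_smult poly_mat_const)
  moreover have "mat 1 + B = poly_mat ([:1:] + smult 3 (Q 2)) H"
    using assms(2)[rule_format, of 2] by (simp add: poly_mat_add poly_mat_smult poly_mat_const)
  ultimately show ?thesis
    using poly_mat_factor_right[OF assms(1)] by metis
qed

lemma stationary_offset_eq:
  fixes H A B M :: "real^'n^'n"
  assumes "invertible H"
    and "matrix_inv H *v q = A *v (matrix_inv H *v q) + B *v (matrix_inv H *v q) + c"
    and "M ** H = mat 1 - A - B"
  shows "c = M *v q"
proof -
  have "c = (mat 1 - A - B) *v (matrix_inv H *v q)"
    using assms(2) by (simp add: algebra_simps)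
  also have "\<dots> = (M ** H) *v (matrix_inv H *v q)"
    by (simp add: assms(3))
  also have "\<dots> = M *v ((H ** matrix_inv H) *v q)"
    by (simp add: matrix_vector_mul_assoc matrix_mul_assoc)
  finally show ?thesis
    by (simp add: matrix_inv_right[OF assms(1)])
qed

theorem theorem1:
  fixes H :: "real^'d^'d" and q :: "real^'d"
    and P Q R :: "nat \<Rightarrow> real poly"
  assumes H: "sym_pos_def H"
    and stat: "\<forall>n\<ge>1. matrix_inv H *v q =
        poly_mat (P n) H *v (matrix_inv H *v q) + poly_mat (Q n) H *v (matrix_inv H *v q)
        + poly_mat (R n) H *v q"
    and scal: "\<exists>A B :: real^'d^'d. \<forall>n\<ge>1.
        poly_mat (P n) H = (real n / (real n + 1)) *\<^sub>R A \<and>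
        poly_mat (Q n) H = ((real n - 1) / (real n + 1)) *\<^sub>R B"
  shows "\<exists>Abar Bbar :: real poly. \<forall>n\<ge>1.
        poly_mat (P n) H = (2 * real n / (real n + 1)) *\<^sub>R
            (mat 1 - (1/2) *\<^sub>R ((poly_mat Abar H + poly_mat Bbar H) ** H)) \<and>
        poly_mat (Q n) H = - (((real n - 1) / (real n + 1)) *\<^sub>R (mat 1 - poly_mat Bbar H ** H)) \<and>
        poly_mat (R n) H *v q = (1 / (real n + 1)) *\<^sub>R ((real n *\<^sub>R poly_mat Abar H + poly_mat Bbar H) *v q)"
proof -
  have inv: "invertible H"
    using H by (rule sym_pos_def_invertible)
  obtain A B :: "real^'d^'d" where AB: "\<forall>n\<ge>1.
        poly_mat (P n) H = (real n / (real n + 1)) *\<^sub>R A \<and>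
        poly_mat (Q n) H = ((real n - 1) / (real n + 1)) *\<^sub>R B"
    using scal by blast
  then obtain s t where s: "poly_mat s H ** H = 2 *\<^sub>R mat 1 - A"
    and t: "poly_mat t H ** H = mat 1 + B"
    using scalable_coefficients_factor[OF inv] by blast
  show ?thesis
  proof (intro exI allI impI conjI)
    fix n :: nat
    assume "n \<ge> 1"
    then have Pn: "poly_mat (P n) H = (real n / (real n + 1)) *\<^sub>R A"
      and Qn: "poly_mat (Q n) H = ((real n - 1) / (real n + 1)) *\<^sub>R B"
      using AB by auto
    note normal_form = scalable_normal_form[OF s t of_nat_0_le_iff]
    show "poly_mat (P n) H = (2 * real n / (real n + 1)) *\<^sub>R
        (mat 1 - (1/2) *\<^sub>R ((poly_mat (s - t) H + poly_mat t H) ** H))"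
      by (simp add: Pn poly_mat_diff normal_form(1))
    show "poly_mat (Q n) H = - (((real n - 1) / (real n + 1)) *\<^sub>R (mat 1 - poly_mat t H ** H))"
      by (simp add: Qn normal_form(2))
    have "poly_mat (R n) H *v q
        = ((1 / (real n + 1)) *\<^sub>R (real n *\<^sub>R poly_mat (s - t) H + poly_mat t H)) *v q"
      using stat[rule_format, OF \<open>n \<ge> 1\<close>] unfolding Pn Qn
      by (rule stationary_offset_eq[OF inv]) (simp add: poly_mat_diff normal_form(3))
    then show "poly_mat (R n) H *v q
        = (1 / (real n + 1)) *\<^sub>R ((real n *\<^sub>R poly_mat (s - t) H + poly_mat t H) *v q)"
      by (simp add: scaleR_matrix_vector_assoc)
  qed
qed

end
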